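(* Let $T$ be a tree on $n\geq 3$ vertices having exactly $p$ pendant vertices (vertices of degree $1$). Then $$\mathrm{rank}(\mathrm{Max4PC}_T)=2(n-p).$$
   Context: For a tree $T$ with vertex set $V$, $|V|=n$, let $d_{x,y}$ denote the distance (number of edges on the path) between vertices $x,y$ in $T$. The maximum four point condition matrix $\mathrm{Max4PC}_T$ is the $\binom{n}{2}\times\binom{n}{2}$ matrix whose rows and columns are indexed by the $2$-element subsets of $V$, and whose entry in the row indexed by $\{w,x\}$ and the column indexed by $\{y,z\}$ is $$\max\{d_{w,x}+d_{y,z},\ d_{w,y}+d_{x,z},\ d_{w,z}+d_{x,y}\}.$$ *)

theory Defs
  imports Main "Jordan_Normal_Form.DL_Rank"
begin

definition simple_graph :: "'a set \<Rightarrow> 'a set set \<Rightarrow> bool" where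
  "simple_graph V E \<longleftrightarrow> finite V \<and> (\<forall>e\<in>E. e \<subseteq> V \<and> card e = 2)"

definition walk :: "'a set set \<Rightarrow> 'a list \<Rightarrow> bool" where
  "walk E xs \<longleftrightarrow> xs \<noteq> [] \<and> (\<forall>i. Suc i < length xs \<longrightarrow> {xs ! i, xs ! Suc i} \<in> E)"

definition connected_graph :: "'a set \<Rightarrow> 'a set set \<Rightarrow> bool" where
  "connected_graph V E \<longleftrightarrow>
     (\<forall>x\<in>V. \<forall>y\<in>V. \<exists>xs. walk E xs \<and> hd xs = x \<and> last xs = y)"

definition is_cycle :: "'a set set \<Rightarrow> 'a list \<Rightarrow> bool" where
  "is_cycle E xs \<longleftrightarrow> walk E xs \<and> distinct xs \<and> length xs \<ge> 3 \<and> {last xs, hd xs} \<in> E"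

definition is_tree :: "'a set \<Rightarrow> 'a set set \<Rightarrow> bool" where
  "is_tree V E \<longleftrightarrow> simple_graph V E \<and> V \<noteq> {} \<and> connected_graph V E \<and> (\<nexists>xs. is_cycle E xs)"

definition dist :: "'a set set \<Rightarrow> 'a \<Rightarrow> 'a \<Rightarrow> nat" where
  "dist E x y = (LEAST k. \<exists>xs. walk E xs \<and> hd xs = x \<and> last xs = y \<and> length xs = Suc k)"

definition degree :: "'a set set \<Rightarrow> 'a \<Rightarrow> nat" where
  "degree E v = card {e\<in>E. v \<in> e}"

definition pendant_vertices :: "'a set \<Rightarrow> 'a set set \<Rightarrow> 'a set" where
  "pendant_vertices V E = {v\<in>V. degree E v = 1}"

definition pairs :: "'a set \<Rightarrow> 'a set set" where
  "pairs V = {e. e \<subseteq> V \<and> card e = 2}"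

(* entry of Max4PC at row {w,x} and column {y,z}; independent of the chosen labelling *)
definition max4pc_entry :: "'a set set \<Rightarrow> 'a set \<Rightarrow> 'a set \<Rightarrow> nat" where
  "max4pc_entry E e f =
     (let (w, x) = (SOME p. e = {fst p, snd p}); (y, z) = (SOME p. f = {fst p, snd p})
      in max (dist E w x + dist E y z) (max (dist E w y + dist E x z) (dist E w z + dist E x y)))"

(* an arbitrary fixed enumeration of a finite set by 0..<card; the rank does not depend on it *)
definition enum_of :: "'b set \<Rightarrow> nat \<Rightarrow> 'b" where
  "enum_of S = (SOME f. bij_betw f {0..<card S} S)"

definition Max4PC :: "'a set \<Rightarrow> 'a set set \<Rightarrow> real mat" where
  "Max4PC V E =
     (let N = card (pairs V); f = enum_of (pairs V)
      in mat N N (\<lambda>(i, j). real (max4pc_entry E (f i) (f j))))"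

definition real_mat_rank :: "real mat \<Rightarrow> nat" where
  "real_mat_rank A = vec_space.rank (dim_row A) A"

end

theory Submission
  imports Defs
begin

text \<open>Every edge e of the tree splits V into two sides, and d u v is the number of edges
  separating u and v. Since these splits are laminar, for each edge the same pairing of
  w, x, y, z attains the maximum of the three sums, so the entry at {w, x}, {y, z} is a sum of
  per-edge terms. Let s(e, P) \<in> {-1, 0, 1} record the side of e containing the pair P (0 if e
  separates P) and c(e, P) = 1 - s(e, P)^2. The term of e is then
  1 + c(e, P) c(e, Q) - s(e, P) s(e, Q), and for a pendant edge it collapses to c(e, P) + c(e, Q),
  which sums to the numbers of leaves in P and Q. Hence all columns lie in the span of the
  2 + 2 (n - 1 - p) functions 1, the leaf count, and c(e, _), s(e, _) for the n - 1 - p inner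
  edges e. Conversely, for an inner edge ab with neighbours x of a and y of b outside ab, the
  differences of the columns at {a, x}, {b, x} and at {b, y}, {a, y} are -c(e, _) \<mp> s(e, _);
  this shows both that these functions lie in the column space and that they are linearly
  independent.\<close>

lemma walk_Nil [simp]: "\<not> walk E []"
  by (simp add: walk_def)

lemma walk_single [simp]: "walk E [x]"
  by (simp add: walk_def)

lemma walk_Cons_Cons: "walk E (x # y # xs) \<longleftrightarrow> {x, y} \<in> E \<and> walk E (y # xs)"
proof
  assume h: "walk E (x # y # xs)"
  have "{(y # xs) ! i, (y # xs) ! Suc i} \<in> E" if "Suc i < length (y # xs)" for i
    using h that unfolding walk_def by (metis Suc_less_eq length_Cons nth_Cons_Suc)
  then show "{x, y} \<in> E \<and> walk E (y # xs)"
    using h unfolding walk_def by (auto dest: spec[of _ 0])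
next
  assume h: "{x, y} \<in> E \<and> walk E (y # xs)"
  show "walk E (x # y # xs)" unfolding walk_def
  proof (intro conjI allI impI)
    fix i assume i: "Suc i < length (x # y # xs)"
    show "{(x # y # xs) ! i, (x # y # xs) ! Suc i} \<in> E"
      using h i unfolding walk_def by (cases i) auto
  qed simp
qed

lemma walk_Cons: "xs \<noteq> [] \<Longrightarrow> walk E (x # xs) \<longleftrightarrow> {x, hd xs} \<in> E \<and> walk E xs"
  by (cases xs) (auto simp: walk_Cons_Cons)

lemma walk_append:
  "walk E xs \<Longrightarrow> walk E ys \<Longrightarrow> {last xs, hd ys} \<in> E \<Longrightarrow> walk E (xs @ ys)"
proof (induction xs)
  case (Cons x xs)
  show ?case
  proof (cases "xs = []")
    case True
    then show ?thesis using Cons.prems by (cases ys) (auto simp: walk_Cons_Cons)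
  next
    case False
    then show ?thesis using Cons walk_Cons[OF False] walk_Cons[of "xs @ ys" E x] by simp
  qed
qed simp

lemma walk_rev: "walk E xs \<Longrightarrow> walk E (rev xs)"
proof (induction xs)
  case (Cons x xs)
  show ?case
  proof (cases "xs = []")
    case False
    then have "walk E (rev xs)" "{last (rev xs), hd [x]} \<in> E"
      using Cons walk_Cons[OF False] by (auto simp: last_rev insert_commute)
    then show ?thesis using walk_append[of E "rev xs" "[x]"] by simp
  qed simp
qed simp

lemma walk_append_tl: "walk E xs \<Longrightarrow> walk E ys \<Longrightarrow> last xs = hd ys \<Longrightarrow> walk E (xs @ tl ys)"
proof (cases "tl ys = []")
  case False
  assume a: "walk E xs" "walk E ys" "last xs = hd ys"
  obtain y ys' where ys: "ys = y # ys'" and "ys' \<noteq> []"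
    using a(2) False by (cases ys) auto
  then show ?thesis using a walk_append[of E xs ys'] walk_Cons[of ys' E y] by simp
qed simp

lemma dist_le_length_walk:
  "walk E xs \<Longrightarrow> hd xs = x \<Longrightarrow> last xs = y \<Longrightarrow> dist E x y \<le> length xs - 1"
  unfolding dist_def by (rule Least_le) (cases xs, auto)

lemma shortest_walk_exists:
  assumes "walk E xs" "hd xs = x" "last xs = y"
  shows "\<exists>ys. walk E ys \<and> hd ys = x \<and> last ys = y \<and> length ys = Suc (dist E x y)"
  unfolding dist_def
proof (rule LeastI_ex)
  show "\<exists>k ys. walk E ys \<and> hd ys = x \<and> last ys = y \<and> length ys = Suc k"
    using assms by (intro exI[of _ "length xs - 1"] exI[of _ xs]) (cases xs, auto)
qed

section \<open>Distances in a tree\<close>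

locale tree =
  fixes V :: "'a set" and E :: "'a set set"
  assumes tree: "is_tree V E"
begin

abbreviation "d \<equiv> dist E"

lemma finite_vertices: "finite V"
  using tree unfolding is_tree_def simple_graph_def by blast

lemma edge_subset: "e \<in> E \<Longrightarrow> e \<subseteq> V"
  using tree unfolding is_tree_def simple_graph_def by blast

lemma card_edge: "e \<in> E \<Longrightarrow> card e = 2"
  using tree unfolding is_tree_def simple_graph_def by blast

lemma finite_edges: "finite E"
proof -
  have "E \<subseteq> Pow V" using edge_subset by auto
  then show ?thesis using finite_vertices finite_subset by auto
qed

lemma adj_neq: "{x, y} \<in> E \<Longrightarrow> x \<noteq> y"
  using card_edge[of "{x, y}"] by (cases "x = y") auto

lemma adj_in_V: "{x, y} \<in> E \<Longrightarrow> x \<in> V" "{x, y} \<in> E \<Longrightarrow> y \<in> V"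
  using edge_subset[of "{x, y}"] by simp_all

lemma no_cycle: "\<not> is_cycle E xs"
  using tree unfolding is_tree_def by blast

lemma shortest_walk:
  assumes "x \<in> V" "y \<in> V"
  obtains xs where "walk E xs" "hd xs = x" "last xs = y" "length xs = Suc (d x y)"
proof -
  have "connected_graph V E" using tree unfolding is_tree_def by blast
  then obtain xs where "walk E xs" "hd xs = x" "last xs = y"
    using assms unfolding connected_graph_def by blast
  from shortest_walk_exists[OF this] show ?thesis using that by blast
qed

lemma d_self [simp]: "d x x = 0"
  using dist_le_length_walk[of E "[x]" x x] by simp

lemma d_le_sym: "x \<in> V \<Longrightarrow> y \<in> V \<Longrightarrow> d y x \<le> d x y"
proof -
  assume V: "x \<in> V" "y \<in> V"
  obtain xs where xs: "walk E xs" "hd xs = x" "last xs = y" "length xs = Suc (d x y)"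
    using V by (rule shortest_walk)
  then have "xs \<noteq> []" by auto
  then have "walk E (rev xs)" "hd (rev xs) = y" "last (rev xs) = x"
    using xs walk_rev by (auto simp: hd_rev last_rev)
  then have "d y x \<le> length (rev xs) - 1" using dist_le_length_walk[of E "rev xs" y x] by simp
  then show ?thesis using xs by simp
qed

lemma d_sym: "x \<in> V \<Longrightarrow> y \<in> V \<Longrightarrow> d x y = d y x"
  using d_le_sym by (simp add: le_antisym)

lemma d_triangle: "x \<in> V \<Longrightarrow> y \<in> V \<Longrightarrow> z \<in> V \<Longrightarrow> d x z \<le> d x y + d y z"
proof -
  assume V: "x \<in> V" "y \<in> V" "z \<in> V"
  obtain xs where xs: "walk E xs" "hd xs = x" "last xs = y" "length xs = Suc (d x y)"
    using V(1,2) by (rule shortest_walk)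
  obtain ys where ys: "walk E ys" "hd ys = y" "last ys = z" "length ys = Suc (d y z)"
    using V(2,3) by (rule shortest_walk)
  have "hd (xs @ tl ys) = x" using xs by (cases xs) auto
  moreover have "last (xs @ tl ys) = z" using xs ys by (cases ys) auto
  ultimately have "d x z \<le> length (xs @ tl ys) - 1"
    using dist_le_length_walk[OF walk_append_tl[OF xs(1) ys(1)]] xs ys by simp
  then show ?thesis using xs ys by simp
qed

lemma d_eq_0: "x \<in> V \<Longrightarrow> y \<in> V \<Longrightarrow> d x y = 0 \<Longrightarrow> x = y"
proof -
  assume "x \<in> V" "y \<in> V" "d x y = 0"
  then obtain xs where "hd xs = x" "last xs = y" "length xs = 1"
    using shortest_walk[of x y] by auto
  then show "x = y" by (cases xs) auto
qed

lemma d_adj: "{x, y} \<in> E \<Longrightarrow> d x y = 1"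
proof -
  assume e: "{x, y} \<in> E"
  then have "d x y \<le> 1"
    using dist_le_length_walk[of E "[x, y]" x y] by (simp add: walk_Cons_Cons)
  moreover have "d x y \<noteq> 0" using d_eq_0 adj_neq adj_in_V e by blast
  ultimately show ?thesis by simp
qed

lemma d_Suc_neighbour:
  assumes V: "x \<in> V" "y \<in> V" and k: "d x y = Suc k"
  obtains x' where "{x, x'} \<in> E" "d x' y = k"
proof -
  obtain xs where xs: "walk E xs" "hd xs = x" "last xs = y" "length xs = Suc (d x y)"
    using V by (rule shortest_walk)
  define xs' where "xs' = tl xs"
  have "length xs' = Suc k" using xs k unfolding xs'_def by simp
  then have xs': "xs = x # xs'" "xs' \<noteq> []"
    using xs(2,4) unfolding xs'_def by (cases xs; auto)+
  then have e: "{x, hd xs'} \<in> E" and w: "walk E xs'" using xs walk_Cons[OF xs'(2)] by auto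
  have "d (hd xs') y \<le> k" using dist_le_length_walk[OF w] xs xs' k by simp
  moreover have "d x y \<le> d x (hd xs') + d (hd xs') y" using d_triangle V adj_in_V(2)[OF e] by blast
  ultimately show ?thesis using that e d_adj[OF e] k by simp
qed

lemma d_adj_le: "{a, b} \<in> E \<Longrightarrow> u \<in> V \<Longrightarrow> d u a \<le> d u b + 1"
  using d_triangle[of u b a] adj_in_V d_adj[of b a] by (fastforce simp: insert_commute)

text \<open>Otherwise extend the path at both ends by a step towards r and descend in t, until the two
  steps meet and close a cycle.\<close>
lemma no_level_bypass:
  assumes r: "r \<in> V"
  shows "\<And>x y Q. x \<in> V \<Longrightarrow> y \<in> V \<Longrightarrow> d r x = t \<Longrightarrow> d r y = t \<Longrightarrow> x \<noteq> y \<Longrightarrow>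
     walk E Q \<Longrightarrow> distinct Q \<Longrightarrow> hd Q = x \<Longrightarrow> last Q = y \<Longrightarrow>
     (\<forall>z\<in>set Q. z \<noteq> x \<longrightarrow> z \<noteq> y \<longrightarrow> t < d r z) \<Longrightarrow> False"
proof (induction t)
  case 0
  then show ?case using d_eq_0 r by (metis d_sym)
next
  case (Suc t)
  obtain x' where x': "{x, x'} \<in> E" "d x' r = t"
    using d_Suc_neighbour[of x r t] Suc.prems r d_sym by metis
  obtain y' where y': "{y, y'} \<in> E" "d y' r = t"
    using d_Suc_neighbour[of y r t] Suc.prems r d_sym by metis
  have x'V: "x' \<in> V" "y' \<in> V" using x' y' adj_in_V by blast+
  have dx': "d r x' = t" "d r y' = t" using x' y' x'V r d_sym by metis+
  have x'Q: "x' \<notin> set Q" "y' \<notin> set Q" using Suc.prems(3,4,10) dx' by fastforce+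
  have Qne: "Q \<noteq> []" using Suc.prems(6) by auto
  show False
  proof (cases "x' = y'")
    case True
    have "length Q \<noteq> 1" using Suc.prems(5,8,9) by (cases Q) auto
    then have "length (x' # Q) \<ge> 3" using Qne by (cases Q) (auto simp: Suc_le_eq)
    then have "is_cycle E (x' # Q)"
      unfolding is_cycle_def using walk_Cons[OF Qne] Suc.prems x' x'Q Qne y' True
      by (auto simp: insert_commute)
    then show False using no_cycle by blast
  next
    case False
    have "walk E (Q @ [y'])" using walk_append[of E Q "[y']"] Suc.prems y' by simp
    then have "walk E (x' # Q @ [y'])"
      using walk_Cons[of "Q @ [y']" E x'] Suc.prems(8) Qne x' by (auto simp: insert_commute)
    moreover have "distinct (x' # Q @ [y'])" using False x'Q Suc.prems(7) by simp
    moreover have "\<forall>z\<in>set (x' # Q @ [y']). z \<noteq> x' \<longrightarrow> z \<noteq> y' \<longrightarrow> t < d r z"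
      using Suc.prems(3,4,10) by fastforce
    ultimately show False using Suc.IH[OF x'V dx' False, of "x' # Q @ [y']"] by simp
  qed
qed

lemma d_adj_neq: "{a, b} \<in> E \<Longrightarrow> r \<in> V \<Longrightarrow> d r a \<noteq> d r b"
proof
  assume e: "{a, b} \<in> E" and r: "r \<in> V" and eq: "d r a = d r b"
  have "walk E [a, b]" using e by (simp add: walk_Cons_Cons)
  then show False using e adj_in_V adj_neq eq
    by (intro no_level_bypass[OF r, of a b "d r a" "[a, b]"]) auto
qed

lemma d_adj_cases: "{a, b} \<in> E \<Longrightarrow> r \<in> V \<Longrightarrow> d r a = d r b + 1 \<or> d r b = d r a + 1"
  using d_adj_neq[of a b r] d_adj_le[of a b r] d_adj_le[of b a r] by (fastforce simp: insert_commute)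

lemma lower_neighbour_unique:
  assumes r: "r \<in> V" and e1: "{v, w1} \<in> E" and e2: "{v, w2} \<in> E"
    and eq: "d r w1 = d r w2" and lt: "d r w1 < d r v"
  shows "w1 = w2"
proof (rule ccontr)
  assume ne: "w1 \<noteq> w2"
  have "walk E [w1, v, w2]" using e1 e2 by (simp add: walk_Cons_Cons insert_commute)
  moreover have "distinct [w1, v, w2]" using ne adj_neq e1 e2 by auto
  ultimately show False using e1 e2 adj_in_V eq lt ne
    by (intro no_level_bypass[OF r, of w1 w2 "d r w1" "[w1, v, w2]"]) auto
qed

end

section \<open>The two sides of an edge\<close>

definition edge_tail :: "'a set \<Rightarrow> 'a" where
  "edge_tail e = fst (SOME p. e = {fst p, snd p} \<and> fst p \<noteq> snd p)"

definition edge_head :: "'a set \<Rightarrow> 'a" where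
  "edge_head e = snd (SOME p. e = {fst p, snd p} \<and> fst p \<noteq> snd p)"

context tree begin

lemma edge_tail_head:
  assumes "e \<in> E"
  shows "e = {edge_tail e, edge_head e}" "edge_tail e \<noteq> edge_head e"
proof -
  obtain a b where "a \<noteq> b" "e = {a, b}" using card_edge[OF assms] card_2_iff by metis
  then have ex: "\<exists>p. e = {fst p, snd p} \<and> fst p \<noteq> snd p" by (intro exI[of _ "(a, b)"]) simp
  show "e = {edge_tail e, edge_head e}" "edge_tail e \<noteq> edge_head e"
    using someI_ex[OF ex] unfolding edge_tail_def edge_head_def by auto
qed

lemma edge_ends_in_E: "e \<in> E \<Longrightarrow> {edge_tail e, edge_head e} \<in> E"
  using edge_tail_head by simp

lemma edge_ends_in_V: "e \<in> E \<Longrightarrow> edge_tail e \<in> V" "e \<in> E \<Longrightarrow> edge_head e \<in> V"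
  using edge_ends_in_E adj_in_V by blast+

text \<open>The orientation of e given by edge_tail and edge_head is an arbitrary choice.\<close>
definition side :: "'a set \<Rightarrow> 'a \<Rightarrow> bool" where
  "side e u \<longleftrightarrow> d u (edge_head e) < d u (edge_tail e)"

text \<open>Otherwise a and the first vertex on a shortest path from b to u' would be two distinct
  neighbours of b that are nearer to u than b is.\<close>
lemma nearer_end_adj:
  assumes ab: "{a, b} \<in> E" and u: "u \<in> V" and "d u a < d u b"
    and uu: "{u, u'} \<in> E" and ne: "{u, u'} \<noteq> {a, b}"
  shows "d u' a < d u' b"
proof (rule ccontr)
  assume "\<not> d u' a < d u' b"
  have V: "a \<in> V" "b \<in> V" "u' \<in> V" using ab uu adj_in_V by blast+
  have c1: "d u b = d u a + 1" using d_adj_cases[OF ab u] assms(3) by auto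
  have c2: "d u' a = d u' b + 1" using d_adj_cases[OF ab V(3)] \<open>\<not> d u' a < d u' b\<close> by auto
  have t1: "d u' a \<le> d u' u + d u a" using d_triangle V u by blast
  have t2: "d u b \<le> d u u' + d u' b" using d_triangle V u by blast
  have duu: "d u u' = 1" "d u' u = 1" using uu d_adj[of u u'] d_adj[of u' u] by (simp_all add: insert_commute)
  have eq1: "d u' b = d u a" using c1 c2 t1 t2 duu by linarith
  have eq2: "d u' a = d u a + 1" using eq1 c2 by simp
  show False
  proof (cases "d u a")
    case 0
    then have "u = a" using d_eq_0 u V by blast
    moreover have "u' = b" using eq1 0 d_eq_0 V by simp
    ultimately show False using ne by simp
  next
    case (Suc x0)
    have "d b u' = Suc x0" using eq1 Suc d_sym V by simp
    then obtain z where z: "{b, z} \<in> E" "d z u' = x0" using d_Suc_neighbour V by blast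
    have zV: "z \<in> V" using z adj_in_V by blast
    have "d u z \<le> d u u' + d u' z" using d_triangle u V zV by blast
    moreover have "d u' z = x0" using z d_sym zV V by simp
    moreover have "d u b \<le> d u z + d z b" using d_triangle u V zV by blast
    moreover have "d z b = 1" using z(1) d_adj[of z b] by (simp add: insert_commute)
    ultimately have dz: "d u z = d u a" using c1 Suc duu by linarith
    have ba: "{b, a} \<in> E" using ab by (simp add: insert_commute)
    have "a = z" by (rule lower_neighbour_unique[OF u ba z(1)]) (use dz c1 in simp_all)
    then show False using z eq2 Suc d_sym V by simp
  qed
qed

lemma side_adj:
  assumes e: "e \<in> E" and u: "u \<in> V" and uu: "{u, u'} \<in> E" and ne: "e \<noteq> {u, u'}"
  shows "side e u = side e u'"
proof -
  have ab: "{edge_tail e, edge_head e} \<in> E" "{edge_head e, edge_tail e} \<in> E"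
    using edge_ends_in_E[OF e] by (auto simp: insert_commute)
  have ne1: "{u, u'} \<noteq> {edge_tail e, edge_head e}" "{u, u'} \<noteq> {edge_head e, edge_tail e}"
    using ne edge_tail_head[OF e] by (auto simp: insert_commute)
  have u': "u' \<in> V" using uu adj_in_V by blast
  have "d u (edge_tail e) \<noteq> d u (edge_head e)" "d u' (edge_tail e) \<noteq> d u' (edge_head e)"
    using d_adj_neq ab u u' by blast+
  then
  show ?thesis unfolding side_def
    using nearer_end_adj[OF ab(1) u _ uu ne1(1)] nearer_end_adj[OF ab(2) u _ uu ne1(2)] by linarith
qed

lemma side_end_iff:
  assumes e: "e \<in> E" and w: "w \<in> e"
  shows "side e w \<longleftrightarrow> w = edge_head e"
proof -
  have "w = edge_tail e \<or> w = edge_head e" using edge_tail_head[OF e] w by blast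
  moreover have "d (edge_tail e) (edge_head e) = 1" "d (edge_head e) (edge_tail e) = 1"
    using d_adj[OF edge_ends_in_E[OF e]] d_sym edge_ends_in_V[OF e] by auto
  ultimately show ?thesis unfolding side_def using edge_tail_head[OF e] by auto
qed

lemma side_edge_towards:
  assumes uu: "{u, u'} \<in> E" and v: "v \<in> V" and lt: "d v u' < d v u"
  shows "side {u, u'} v = side {u, u'} u'"
proof -
  have "(edge_tail {u, u'} = u \<and> edge_head {u, u'} = u') \<or> (edge_tail {u, u'} = u' \<and> edge_head {u, u'} = u)"
    using edge_tail_head[OF uu] by (auto simp: doubleton_eq_iff)
  moreover have "side {u, u'} u' \<longleftrightarrow> u' = edge_head {u, u'}" using side_end_iff[OF uu] by simp
  ultimately show ?thesis unfolding side_def using lt by auto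
qed

lemma d_through_edge:
  assumes ab: "{a, b} \<in> E" and v: "v \<in> V"  and vb: "d v b < d v a"
  shows "u \<in> V \<Longrightarrow> d u a < d u b \<Longrightarrow> d u v = d u a + 1 + d b v"
proof (induction "d u v" arbitrary: u)
  case 0
  then have "u = v" using d_eq_0 v by simp
  then show ?case using 0 vb by simp
next
  case (Suc k)
  have V: "a \<in> V" "b \<in> V" using ab adj_in_V by blast+
  obtain u' where u': "{u, u'} \<in> E" "d u' v = k" using d_Suc_neighbour[of u v k] Suc v by metis
  have u'V: "u' \<in> V" using u' adj_in_V by blast
  show ?case
  proof (cases "{u, u'} = {a, b}")
    case True
    have "u \<noteq> b" using Suc.prems d_adj ab by (auto simp: insert_commute)
    then have "u = a" "u' = b" using True by (auto simp: doubleton_eq_iff)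
    then show ?thesis using Suc.hyps u' by simp
  next
    case False
    have "d u' a < d u' b" using nearer_end_adj[OF ab Suc.prems(1) Suc.prems(2) u'(1) False] .
    then have IH: "d u' v = d u' a + 1 + d b v" using Suc.hyps(1)[of u'] u' u'V by simp
    have "d u a \<le> d u u' + d u' a" using d_triangle Suc.prems V u'V by blast
    moreover have "d u v \<le> d u a + d a b + d b v"
      using d_triangle[of u a v] d_triangle[of a b v] Suc.prems V v by fastforce
    moreover have "d a b = 1" "d u u' = 1" using d_adj ab u' by blast+
    ultimately show ?thesis using IH Suc.hyps(2) u' by linarith
  qed
qed

lemma d_across_sides:
  assumes e: "e \<in> E" and u: "u \<in> V" and v: "v \<in> V" and su: "\<not> side e u" and sv: "side e v"
  shows "d u v = d u (edge_tail e) + 1 + d (edge_head e) v"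
proof -
  have ab: "{edge_tail e, edge_head e} \<in> E" using edge_ends_in_E[OF e] .
  have "d u (edge_tail e) \<noteq> d u (edge_head e)" using d_adj_neq ab u by blast
  then have "d u (edge_tail e) < d u (edge_head e)" using su unfolding side_def by linarith
  then show ?thesis using d_through_edge[OF ab v] sv u unfolding side_def by blast
qed

end

definition cut_entry :: "bool \<Rightarrow> bool \<Rightarrow> bool \<Rightarrow> bool \<Rightarrow> nat" where
  "cut_entry w x y z =
     max (of_bool (w \<noteq> x) + of_bool (y \<noteq> z))
       (max (of_bool (w \<noteq> y) + of_bool (x \<noteq> z)) (of_bool (w \<noteq> z) + of_bool (x \<noteq> y)))"

lemma cut_entry_eq_first:
  "\<not> (w = x \<and> y = z \<and> w \<noteq> y) \<Longrightarrow> cut_entry w x y z = of_bool (w \<noteq> x) + of_bool (y \<noteq> z)"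
  unfolding cut_entry_def by (cases w; cases x; cases y; cases z) simp_all

lemma cut_entry_eq_second:
  "\<not> (w = y \<and> x = z \<and> w \<noteq> x) \<Longrightarrow> cut_entry w x y z = of_bool (w \<noteq> y) + of_bool (x \<noteq> z)"
  unfolding cut_entry_def by (cases w; cases x; cases y; cases z) simp_all

context tree begin

lemma d_eq_card_separating: "u \<in> V \<Longrightarrow> v \<in> V \<Longrightarrow> d u v = card {e\<in>E. side e u \<noteq> side e v}"
proof (induction "d u v" arbitrary: u)
  case 0
  then have "u = v" using d_eq_0 by simp
  then show ?case using 0 by simp
next
  case (Suc k)
  obtain u' where u': "{u, u'} \<in> E" "d u' v = k" using d_Suc_neighbour[of u v k] Suc by metis
  have u'V: "u' \<in> V" using u' adj_in_V by blast
  have IH: "k = card {e\<in>E. side e u' \<noteq> side e v}" using Suc.hyps(1)[of u'] u' u'V Suc.prems by simp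
  have neq: "u \<noteq> u'" using adj_neq u' by blast
  have s1: "side {u, u'} v = side {u, u'} u'"
    using side_edge_towards[OF u'(1) Suc.prems(2)] u' Suc.hyps(2) d_sym Suc.prems u'V by simp
  have s2: "side {u, u'} u \<noteq> side {u, u'} u'"
  proof -
    have "edge_head {u, u'} \<in> {u, u'}" using edge_tail_head[OF u'(1)] by blast
    then show ?thesis using side_end_iff[OF u'(1)] neq by auto
  qed
  have eq: "{e\<in>E. side e u \<noteq> side e v} = insert {u, u'} {e\<in>E. side e u' \<noteq> side e v}"
  proof (intro equalityI subsetI)
    fix e assume "e \<in> {e\<in>E. side e u \<noteq> side e v}"
    then show "e \<in> insert {u, u'} {e\<in>E. side e u' \<noteq> side e v}"
      using side_adj[OF _ Suc.prems(1) u'(1)] by auto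
  next
    fix e assume "e \<in> insert {u, u'} {e\<in>E. side e u' \<noteq> side e v}"
    then show "e \<in> {e\<in>E. side e u \<noteq> side e v}"
      using side_adj[OF _ Suc.prems(1) u'(1)] s1 s2 u'(1) by auto
  qed
  have notin: "{u, u'} \<notin> {e\<in>E. side e u' \<noteq> side e v}" using s1 by simp
  have fin: "finite {e\<in>E. side e u' \<noteq> side e v}" using finite_edges by simp
  show ?case using eq notin fin IH Suc.hyps(2) by simp
qed

lemma d_eq_sum_separating: "u \<in> V \<Longrightarrow> v \<in> V \<Longrightarrow> d u v = (\<Sum>e\<in>E. of_bool (side e u \<noteq> side e v))"
proof -
  assume "u \<in> V" "v \<in> V"
  then have "d u v = card {e\<in>E. side e u \<noteq> side e v}" by (rule d_eq_card_separating)
  also have "\<dots> = (\<Sum>e\<in>{e\<in>E. side e u \<noteq> side e v}. 1)" by simp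
  also have "\<dots> = (\<Sum>e\<in>E. if side e u \<noteq> side e v then 1 else 0)"
    by (rule sum.inter_filter[OF finite_edges])
  also have "\<dots> = (\<Sum>e\<in>E. of_bool (side e u \<noteq> side e v))"
    by (simp add: of_bool_def)
  finally show ?thesis .
qed

text \<open>The side of e away from f lies within a single side of f.\<close>
lemma sides_laminar:
  assumes e: "e \<in> E" and f: "f \<in> E" and ne: "e \<noteq> f"
  shows "\<exists>p q. \<forall>u\<in>V. \<not> (side e u = p \<and> side f u = q)"
proof -
  let ?a = "edge_tail e" and ?b = "edge_head e" and ?a' = "edge_tail f" and ?b' = "edge_head f"
  have abE: "{?a,?b} \<in> E" "{?a',?b'} \<in> E" using edge_ends_in_E e f by blast+
  have V: "?a \<in> V" "?b \<in> V" "?a' \<in> V" "?b' \<in> V" using edge_ends_in_V e f by blast+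
  have q0: "side f ?a = side f ?b" using side_adj[OF f V(1) abE(1)] ne edge_tail_head[OF e] by simp
  have p0: "side e ?a' = side e ?b'" using side_adj[OF e V(3) abE(2)] ne edge_tail_head[OF f] by simp
  have key: "side f u = side f ?a" if u: "u \<in> V" and su: "side e u = (\<not> side e ?a')" for u
  proof (cases "side e ?a'")
    case True
    then have "\<not> side e u" using su by simp
    then have d1: "d u ?a' = d u ?a + 1 + d ?b ?a'" and d2: "d u ?b' = d u ?a + 1 + d ?b ?b'"
      using d_across_sides[OF e u] V True p0 by auto
    show ?thesis using d1 d2 q0 unfolding side_def by (simp add: d_sym V u)
  next
    case False
    then have "side e u" using su by simp
    then have d1: "d ?a' u = d ?a' ?a + 1 + d ?b u" and d2: "d ?b' u = d ?b' ?a + 1 + d ?b u"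
      using d_across_sides[OF e _ u] V False p0 by auto
    have "side f u \<longleftrightarrow> d ?b' u < d ?a' u" unfolding side_def using d_sym V u by simp
    also have "\<dots> \<longleftrightarrow> d ?b' ?a < d ?a' ?a" using d1 d2 by simp
    also have "\<dots> \<longleftrightarrow> side f ?a" unfolding side_def using d_sym V by simp
    finally show ?thesis .
  qed
  show ?thesis
    by (intro exI[of _ "\<not> side e ?a'"] exI[of _ "\<not> side f ?a"]) (use key in auto)
qed

lemma splits_compatible:
  assumes V: "w \<in> V" "x \<in> V" "y \<in> V" "z \<in> V" and ef: "e \<in> E" "f \<in> E"
    and e: "side e w = side e x" "side e y = side e z" "side e w \<noteq> side e y"
  shows "\<not> (side f w = side f y \<and> side f x = side f z \<and> side f w \<noteq> side f x)"
proof
  assume h: "side f w = side f y \<and> side f x = side f z \<and> side f w \<noteq> side f x"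
  show False
  proof (cases "e = f")
    case False
    then obtain p q where "\<forall>u\<in>V. \<not> (side e u = p \<and> side f u = q)"
      using sides_laminar[OF ef] by blast
    then have "\<not> (side e u = p \<and> side f u = q)" if "u \<in> {w, x, y, z}" for u
      using V that by blast
    then show False using e h by (cases p; cases q; cases "side e w"; cases "side f w") auto
  qed (use e h in simp)
qed

text \<open>By laminarity the same split of w, x, y, z attains the maximum of the three sums for every
  edge, so the maximum commutes with the sum over the edges.\<close>
lemma max4pc_eq_sum_cut_entry:
  assumes V: "w \<in> V" "x \<in> V" "y \<in> V" "z \<in> V"
  shows "max (d w x + d y z) (max (d w y + d x z) (d w z + d x y))
       = (\<Sum>e\<in>E. cut_entry (side e w) (side e x) (side e y) (side e z))"
    (is "_ = ?P")
proof -
  define S1 :: nat where "S1 = (\<Sum>e\<in>E. of_bool (side e w \<noteq> side e x) + of_bool (side e y \<noteq> side e z))"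
  define S2 :: nat where "S2 = (\<Sum>e\<in>E. of_bool (side e w \<noteq> side e y) + of_bool (side e x \<noteq> side e z))"
  define S3 :: nat where "S3 = (\<Sum>e\<in>E. of_bool (side e w \<noteq> side e z) + of_bool (side e x \<noteq> side e y))"
  have "d w x + d y z = S1" "d w y + d x z = S2" "d w z + d x y = S3"
    unfolding S1_def S2_def S3_def using d_eq_sum_separating V by (simp_all add: sum.distrib)
  moreover have "S1 \<le> ?P" "S2 \<le> ?P" "S3 \<le> ?P"
    unfolding S1_def S2_def S3_def by (rule sum_mono, simp add: cut_entry_def)+
  moreover have "S1 = ?P \<or> S2 = ?P"
  proof (cases "\<exists>e\<in>E. side e w = side e x \<and> side e y = side e z \<and> side e w \<noteq> side e y")
    case False
    then show ?thesis unfolding S1_def by (auto intro!: sum.cong simp: cut_entry_eq_first)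
  next
    case True
    then show ?thesis unfolding S2_def using splits_compatible[OF V]
      by (auto intro!: sum.cong simp: cut_entry_eq_second)
  qed
  ultimately show ?thesis by linarith
qed

end

context tree begin

lemma edge_other_end: "e \<in> E \<Longrightarrow> v \<in> e \<Longrightarrow> \<exists>w. e = {v, w}"
  using edge_tail_head by (metis insert_commute insert_iff singletonD)

definition leaf_edge :: "'a \<Rightarrow> 'a set" where
  "leaf_edge l = the_elem {e\<in>E. l \<in> e}"

lemma leaf_edge:
  assumes "degree E l = 1"
  shows "leaf_edge l \<in> E" "l \<in> leaf_edge l" "\<And>e. e \<in> E \<Longrightarrow> l \<in> e \<Longrightarrow> e = leaf_edge l"
proof -
  obtain e0 where e0: "{e\<in>E. l \<in> e} = {e0}"
    using assms unfolding degree_def by (rule card_1_singletonE)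
  then have "leaf_edge l = e0" unfolding leaf_edge_def by simp
  then show "leaf_edge l \<in> E" "l \<in> leaf_edge l" "\<And>e. e \<in> E \<Longrightarrow> l \<in> e \<Longrightarrow> e = leaf_edge l"
    using e0 by blast+
qed

lemma leaf_edge_eq: "degree E l = 1 \<Longrightarrow> {l, m} \<in> E \<Longrightarrow> leaf_edge l = {l, m}"
  using leaf_edge(3) by blast

lemma leaf_neighbour_unique: "degree E v = 1 \<Longrightarrow> {v, w} \<in> E \<Longrightarrow> {v, w'} \<in> E \<Longrightarrow> w = w'"
  using leaf_edge_eq adj_neq by (metis doubleton_eq_iff)

lemma not_adjacent_leaves:
  assumes card3: "card V \<ge> 3" and e: "{l, m} \<in> E" and dl: "degree E l = 1"
  shows "degree E m \<noteq> 1"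
proof
  assume dm: "degree E m = 1"
  have V: "l \<in> V" "m \<in> V" using e adj_in_V by blast+
  have "card {l, m} \<le> 2" by (cases "l = m") auto
  then have "\<not> V \<subseteq> {l, m}" using card_mono[of "{l, m}" V] card3 by auto
  then obtain z where z: "z \<in> V" "z \<noteq> l" "z \<noteq> m" by blast
  have "d l z \<noteq> 0" using d_eq_0 z V by blast
  then obtain k where k: "d l z = Suc k" by (cases "d l z") auto
  then obtain z' where z': "{l, z'} \<in> E" "d z' z = k" using d_Suc_neighbour V z by blast
  have dmz: "d m z = k" using z' leaf_neighbour_unique[OF dl z'(1) e] by simp
  have "d m z \<noteq> 0" using d_eq_0 z V by blast
  then obtain k' where k': "k = Suc k'" using dmz by (cases k) auto
  then obtain z'' where z'': "{m, z''} \<in> E" "d z'' z = k'" using d_Suc_neighbour V z dmz by blast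
  have "{m, l} \<in> E" using e by (simp add: insert_commute)
  then have "z'' = l" using leaf_neighbour_unique[OF dm z''(1)] by blast
  then show False using z'' k k' by simp
qed

lemma parent_exists:
  assumes r: "r \<in> V" and v: "v \<in> V" "v \<noteq> r"
  shows "\<exists>w. {v, w} \<in> E \<and> d r w + 1 = d r v"
proof -
  have "d r v \<noteq> 0" using d_eq_0 r v by metis
  then obtain k where k: "d r v = Suc k" by (cases "d r v") auto
  then have "d v r = Suc k" using d_sym r v by simp
  then obtain w where w: "{v, w} \<in> E" "d w r = k" using d_Suc_neighbour v r by blast
  then have "d r w = k" using d_sym r adj_in_V by metis
  then show ?thesis using w k by auto
qed

lemma exists_leaf:
  assumes card2: "card V \<ge> 2"
  shows "\<exists>v\<in>V. degree E v = 1"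
proof -
  obtain r where r: "r \<in> V" using card2 by (metis card.empty ex_in_conv not_numeral_le_zero)
  have fin: "finite (d r ` V)" using finite_vertices by simp
  have ne: "d r ` V \<noteq> {}" using r by blast
  obtain v where v: "v \<in> V" "d r v = Max (d r ` V)" using Max_in[OF fin ne] by auto
  have max: "\<And>u. u \<in> V \<Longrightarrow> d r u \<le> d r v" using v fin by simp
  have "V \<noteq> {r}" using card2 by auto
  then obtain u where u: "u \<in> V" "u \<noteq> r" using r by blast
  have "d r u \<noteq> 0" using d_eq_0[OF r u(1)] u(2) by auto
  then have "d r v \<noteq> 0" using max[OF u(1)] by linarith
  then have "v \<noteq> r" by auto
  then obtain w where w: "{v, w} \<in> E" "d r w + 1 = d r v" using parent_exists[OF r v(1)] by blast
  have "e = {v, w}" if e: "e \<in> E" "v \<in> e" for e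
  proof -
    obtain w' where w': "e = {v, w'}" using edge_other_end e by blast
    have w'V: "w' \<in> V" using e w' adj_in_V by blast
    have "{w', v} \<in> E" using e w' by (simp add: insert_commute)
    then have "d r w' = d r v + 1 \<or> d r v = d r w' + 1" using d_adj_cases[of w' v r] r by blast
    then have "d r w' = d r w" using max[OF w'V] w(2) by linarith
    moreover have "{v, w'} \<in> E" using e w' by simp
    ultimately have "w' = w" using lower_neighbour_unique[OF r _ w(1)] w(2) by simp
    then show ?thesis using w' by simp
  qed
  then have "{e\<in>E. v \<in> e} = {{v, w}}" using w(1) by blast
  then have "degree E v = 1" unfolding degree_def by simp
  then show ?thesis using v by blast
qed

lemma d_leaf_neighbour_less:
  assumes dl: "degree E l = 1" and e: "{l, m} \<in> E" and u: "u \<in> V" and ul: "u \<noteq> l"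
  shows "d u m < d u l"
proof (rule ccontr)
  have V: "l \<in> V" "m \<in> V" using e adj_in_V by blast+
  assume "\<not> d u m < d u l"
  then have dm: "d u m = d u l + 1" using d_adj_cases[OF e u] by auto
  have "d u l \<noteq> 0" using d_eq_0 u V ul by blast
  then obtain k where k: "d l u = Suc k" using d_sym u V by (cases "d u l") auto
  then obtain z where z: "{l, z} \<in> E" "d z u = k" using d_Suc_neighbour V u by blast
  have "z = m" using leaf_neighbour_unique[OF dl z(1) e] .
  then show False using z dm k d_sym u V by simp
qed

text \<open>Rooting the tree at r, every other vertex v is matched with the edge to its parent.\<close>
lemma card_edges: "card E = card V - 1"
proof -
  obtain r where r: "r \<in> V" using tree unfolding is_tree_def by blast
  define par where "par v = (SOME w. {v, w} \<in> E \<and> d r w + 1 = d r v)" for v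
  have par: "{v, par v} \<in> E \<and> d r (par v) + 1 = d r v" if "v \<in> V" "v \<noteq> r" for v
    unfolding par_def using parent_exists[OF r that] by (rule someI_ex)
  have "(\<lambda>v. {v, par v}) ` (V - {r}) = E"
  proof (intro equalityI subsetI)
    fix e assume e: "e \<in> E"
    have "e \<in> (\<lambda>v. {v, par v}) ` (V - {r})"
      if h: "{a, b} \<in> E" "d r a = d r b + 1" "e = {a, b}" for a b
    proof -
      have "a \<in> V" "a \<noteq> r" using h adj_in_V by auto
      moreover have "par a = b"
        using lower_neighbour_unique[OF r, of a "par a" b] par[of a] h calculation by simp
      ultimately show ?thesis using h by auto
    qed
    moreover have "{edge_tail e, edge_head e} \<in> E" "{edge_head e, edge_tail e} \<in> E"
      "e = {edge_tail e, edge_head e}" "e = {edge_head e, edge_tail e}"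
      using edge_tail_head[OF e] e by (auto simp: insert_commute)
    ultimately show "e \<in> (\<lambda>v. {v, par v}) ` (V - {r})"
      using d_adj_cases[OF _ r, of "edge_tail e" "edge_head e"] by metis
  qed (use par in auto)
  moreover have "inj_on (\<lambda>v. {v, par v}) (V - {r})"
  proof (rule inj_onI, rule ccontr)
    fix v w assume v: "v \<in> V - {r}" and w: "w \<in> V - {r}" and "{v, par v} = {w, par w}" "v \<noteq> w"
    then have h: "v = par w" "w = par v" by (auto simp: doubleton_eq_iff)
    have "d r (par v) + 1 = d r v" "d r (par w) + 1 = d r w" using par v w by auto
    then show False unfolding h[symmetric] by simp
  qed
  ultimately show ?thesis using card_image r finite_vertices by fastforce
qed

definition pendant_edges :: "'a set set" where
  "pendant_edges = {e\<in>E. \<exists>v\<in>e. degree E v = 1}"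

definition inner_edges :: "'a set set" where
  "inner_edges = E - pendant_edges"

lemma bij_betw_leaf_edge:
  assumes card3: "card V \<ge> 3"
  shows "bij_betw leaf_edge (pendant_vertices V E) pendant_edges"
proof (rule bij_betw_imageI)
  show "inj_on leaf_edge (pendant_vertices V E)"
  proof (rule inj_onI, rule ccontr)
    fix l1 l2 assume l: "l1 \<in> pendant_vertices V E" "l2 \<in> pendant_vertices V E"
      and eq: "leaf_edge l1 = leaf_edge l2" and ne: "l1 \<noteq> l2"
    have dl: "degree E l1 = 1" "degree E l2 = 1" using l unfolding pendant_vertices_def by auto
    obtain m where "leaf_edge l1 = {l1, m}" using edge_other_end leaf_edge(1,2)[OF dl(1)] by blast
    moreover have "l2 \<in> leaf_edge l1" using eq leaf_edge(2)[OF dl(2)] by simp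
    ultimately have "{l1, l2} \<in> E" using ne leaf_edge(1)[OF dl(1)] by auto
    then show False using not_adjacent_leaves[OF card3 _ dl(1)] dl(2) by blast
  qed
  show "leaf_edge ` pendant_vertices V E = pendant_edges"
  proof (intro equalityI subsetI)
    fix e assume "e \<in> leaf_edge ` pendant_vertices V E"
    then show "e \<in> pendant_edges"
      using leaf_edge(1,2) unfolding pendant_edges_def pendant_vertices_def by blast
  next
    fix e assume "e \<in> pendant_edges"
    then obtain v where v: "e \<in> E" "v \<in> e" "degree E v = 1" unfolding pendant_edges_def by blast
    then have "v \<in> pendant_vertices V E" using edge_subset unfolding pendant_vertices_def by blast
    moreover have "e = leaf_edge v" using leaf_edge(3)[OF v(3) v(1,2)] .
    ultimately show "e \<in> leaf_edge ` pendant_vertices V E" by blast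
  qed
qed

lemma card_inner_edges:
  assumes "card V \<ge> 3"
  shows "card inner_edges + card (pendant_vertices V E) = card V - 1"
proof -
  have "pendant_edges \<subseteq> E" unfolding pendant_edges_def by auto
  then have "card inner_edges + card pendant_edges = card E"
    unfolding inner_edges_def using finite_edges card_Diff_subset[of pendant_edges E]
    by (metis card_mono le_add_diff_inverse2 rev_finite_subset)
  then show ?thesis using card_edges bij_betw_same_card[OF bij_betw_leaf_edge[OF assms]] by simp
qed

end

section \<open>Entries of Max4PC as sums over edges\<close>

lemma real_cut_entry:
  "real (cut_entry a b c e) =
     1 + (1 - (of_bool a + of_bool b - 1)\<^sup>2) * (1 - (of_bool c + of_bool e - 1)\<^sup>2)
       - (of_bool a + of_bool b - 1) * (of_bool c + of_bool e - (1::real))"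
  unfolding cut_entry_def by (cases a; cases b; cases c; cases e) (simp_all add: power2_eq_square)

lemma card_2_some_pair:
  assumes "card P = 2"
  defines "p \<equiv> SOME p. P = {fst p, snd p}"
  shows "P = {fst p, snd p}" "fst p \<noteq> snd p"
proof -
  obtain a b where "P = {a, b}" using assms card_2_iff by metis
  then have "\<exists>p. P = {fst p, snd p}" by (intro exI[of _ "(a, b)"]) simp
  then show eq: "P = {fst p, snd p}" unfolding p_def by (rule someI_ex)
  show "fst p \<noteq> snd p"
  proof
    assume "fst p = snd p"
    then have "card P = 1" by (subst eq) simp
    then show False using assms by simp
  qed
qed

lemma pairsE:
  assumes "P \<in> pairs V"
  obtains w x where "P = {w, x}" "w \<noteq> x" "w \<in> V" "x \<in> V"
proof -
  have "card P = 2" "P \<subseteq> V" using assms unfolding pairs_def by auto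
  then show ?thesis using that card_2_iff[of P] by auto
qed

lemma pairsI: "u \<in> V \<Longrightarrow> v \<in> V \<Longrightarrow> u \<noteq> v \<Longrightarrow> {u, v} \<in> pairs V"
  unfolding pairs_def by auto

context tree begin

text \<open>For a pair P and an edge e, side_sign e P is 0 if e separates the two vertices of P and
  \<plusminus>1 according to the side of e containing P otherwise; cut_ind e P indicates separation.\<close>
definition side_sign :: "'a set \<Rightarrow> 'a set \<Rightarrow> real" where
  "side_sign e P = (\<Sum>u\<in>P. of_bool (side e u)) - 1"

definition cut_ind :: "'a set \<Rightarrow> 'a set \<Rightarrow> real" where
  "cut_ind e P = 1 - (side_sign e P)\<^sup>2"

lemma side_sign_pair: "u \<noteq> v \<Longrightarrow> side_sign e {u, v} = of_bool (side e u) + of_bool (side e v) - 1"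
  unfolding side_sign_def by simp

lemma max4pc_entry_eq_sum:
  assumes P: "P \<in> pairs V" and Q: "Q \<in> pairs V"
  shows "real (max4pc_entry E P Q) = (\<Sum>e\<in>E. 1 + cut_ind e P * cut_ind e Q - side_sign e P * side_sign e Q)"
proof -
  define w where "w = fst (SOME p. P = {fst p, snd p})"
  define x where "x = snd (SOME p. P = {fst p, snd p})"
  define y where "y = fst (SOME p. Q = {fst p, snd p})"
  define z where "z = snd (SOME p. Q = {fst p, snd p})"
  have Pw: "P = {w, x}" "w \<noteq> x" and Qy: "Q = {y, z}" "y \<noteq> z"
    using card_2_some_pair P Q unfolding w_def x_def y_def z_def pairs_def by auto
  have V: "w \<in> V" "x \<in> V" "y \<in> V" "z \<in> V" using Pw Qy P Q unfolding pairs_def by auto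
  have "max4pc_entry E P Q = max (d w x + d y z) (max (d w y + d x z) (d w z + d x y))"
    unfolding max4pc_entry_def Let_def w_def x_def y_def z_def by (simp add: case_prod_unfold)
  also have "\<dots> = (\<Sum>e\<in>E. cut_entry (side e w) (side e x) (side e y) (side e z))"
    using max4pc_eq_sum_cut_entry V by blast
  finally show ?thesis
    by (simp add: real_cut_entry cut_ind_def side_sign_pair Pw Qy)
qed

lemma side_other_end: "{a, b} \<in> E \<Longrightarrow> side {a, b} b = (\<not> side {a, b} a)"
  using side_end_iff[of "{a, b}"] edge_tail_head[of "{a, b}"] adj_neq[of a b]
  by (auto simp: doubleton_eq_iff)

lemma side_leaf_edge:
  assumes dl: "degree E v = 1" and e: "{v, m} \<in> E" and u: "u \<in> V" "u \<noteq> v"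
  shows "side {v, m} u = side {v, m} m"
proof -
  have "d u m < d u v" using d_leaf_neighbour_less[OF dl e u] .
  moreover have "d m m < d m v" using d_adj[of m v] e by (simp add: insert_commute)
  moreover have "(edge_tail {v, m} = v \<and> edge_head {v, m} = m) \<or> (edge_tail {v, m} = m \<and> edge_head {v, m} = v)"
    using edge_tail_head[OF e] by (auto simp: doubleton_eq_iff)
  ultimately show ?thesis unfolding side_def by auto
qed

lemma leaf_edge_values:
  assumes dl: "degree E v = 1" and e: "{v, m} \<in> E" and P: "P \<in> pairs V"
  shows "cut_ind {v, m} P = of_bool (v \<in> P)"
    and "side_sign {v, m} P = (if v \<in> P then 0 else 2 * of_bool (side {v, m} m) - 1)"
proof -
  obtain w x where wx: "P = {w, x}" "w \<noteq> x" "w \<in> V" "x \<in> V" using P by (rule pairsE)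
  have sv: "side {v, m} v = (\<not> side {v, m} m)"
    using side_other_end[of m v] e by (simp add: insert_commute)
  have ps: "\<And>u. u \<in> V \<Longrightarrow> u \<noteq> v \<Longrightarrow> side {v, m} u = side {v, m} m" using side_leaf_edge[OF dl e] by blast
  show sgn: "side_sign {v, m} P = (if v \<in> P then 0 else 2 * of_bool (side {v, m} m) - 1)"
    using wx ps[of w] ps[of x] sv by (cases "w = v"; cases "x = v") (auto simp: side_sign_pair)
  show "cut_ind {v, m} P = of_bool (v \<in> P)"
    unfolding cut_ind_def sgn by (cases "side {v, m} m") (simp_all add: power2_eq_square)
qed

lemma pendant_edge_term:
  assumes e: "e \<in> pendant_edges" and P: "P \<in> pairs V" and Q: "Q \<in> pairs V"
  shows "1 + cut_ind e P * cut_ind e Q - side_sign e P * side_sign e Q = cut_ind e P + cut_ind e Q"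
proof -
  obtain v where v: "e \<in> E" "v \<in> e" "degree E v = 1" using e unfolding pendant_edges_def by blast
  obtain m where m: "e = {v, m}" using edge_other_end v by blast
  show ?thesis using leaf_edge_values[OF v(3) _ P] leaf_edge_values[OF v(3) _ Q] v(1) unfolding m
    by (cases "side {v, m} m") (auto simp: algebra_simps)
qed

end

section \<open>Rank of a kernel matrix\<close>

context vec_space begin

lemma vec_lincomb_in_span:
  assumes S: "S \<subseteq> carrier_vec n" and K: "finite K" and v: "\<And>i. i \<in> K \<Longrightarrow> v i \<in> span S"
  shows "vec n (\<lambda>r. \<Sum>i\<in>K. c i * v i $ r) \<in> span S"
  using K v
proof (induction K)
  case empty
  have "vec n (\<lambda>r. \<Sum>i\<in>{}. c i * v i $ r) = 0\<^sub>v n" by (auto simp: zero_vec_def)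
  then show ?case
    using LinearCombinations.submodule.zero_closed[OF span_is_submodule[OF S]] by simp
next
  case (insert j K)
  have sub: "LinearCombinations.submodule class_ring (span S) V" using span_is_submodule[OF S] .
  have vj: "v j \<in> span S" using insert by simp
  have vjc: "v j \<in> carrier_vec n" using span_is_subset2[OF S] vj by auto
  have "vec n (\<lambda>r. \<Sum>i\<in>insert j K. c i * v i $ r) = c j \<cdot>\<^sub>v v j + vec n (\<lambda>r. \<Sum>i\<in>K. c i * v i $ r)"
    using vjc insert(1,2) by (intro eq_vecI) auto
  moreover have "c j \<cdot>\<^sub>v v j \<in> span S"
    using LinearCombinations.submodule.smult_closed[OF sub] vj by simp
  ultimately show ?case
    using LinearCombinations.submodule.m_closed[OF sub] insert by simp
qed

lemma lin_indpt_family: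
  assumes K: "finite K" and vc: "\<And>i. i \<in> K \<Longrightarrow> v i \<in> carrier_vec n"
    and ind: "\<And>lam. vec n (\<lambda>r. \<Sum>i\<in>K. lam i * v i $ r) = 0\<^sub>v n \<Longrightarrow> \<forall>i\<in>K. lam i = 0"
  shows "inj_on v K" "lin_indpt (v ` K)"
proof -
  show inj: "inj_on v K"
  proof (rule inj_onI, rule ccontr)
    fix i j assume i: "i \<in> K" and j: "j \<in> K" and eq: "v i = v j" and ne: "i \<noteq> j"
    define lam :: "_ \<Rightarrow> 'a" where "lam k = (if k = i then 1 else if k = j then -1 else 0)" for k
    have "vec n (\<lambda>r. \<Sum>k\<in>K. lam k * v k $ r) = 0\<^sub>v n"
    proof (intro eq_vecI)
      fix r assume r: "r < dim_vec (0\<^sub>v n :: 'a vec)"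
      have "(\<Sum>k\<in>K. lam k * v k $ r) = (\<Sum>k\<in>K. (if k = i then v k $ r else 0) + (if k = j then - v k $ r else 0))"
        unfolding lam_def using ne by (intro sum.cong refl) auto
      also have "\<dots> = v i $ r - v j $ r" using K i j by (simp add: sum.distrib)
      finally show "vec n (\<lambda>r. \<Sum>k\<in>K. lam k * v k $ r) $ r = 0\<^sub>v n $ r" using r eq by simp
    qed simp
    then have "lam i = 0" using ind i by blast
    then show False unfolding lam_def by simp
  qed
  have vK: "v ` K \<subseteq> carrier_vec n" using vc by auto
  show "lin_indpt (v ` K)"
  proof (rule finite_lin_indpt2)
    fix a assume a0: "lincomb a (v ` K) = 0\<^sub>v n"
    have "vec n (\<lambda>r. \<Sum>i\<in>K. a (v i) * v i $ r) = lincomb a (v ` K)"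
    proof (intro eq_vecI)
      fix r assume r: "r < dim_vec (lincomb a (v ` K))"
      then have rn: "r < n" using lincomb_dim[OF _ vK] K by (metis finite_imageI)
      have "lincomb a (v ` K) $ r = (\<Sum>x\<in>v ` K. a x * x $ r)" using lincomb_index[OF rn vK] .
      also have "\<dots> = (\<Sum>i\<in>K. a (v i) * v i $ r)" using sum.reindex[OF inj] by simp
      finally show "vec n (\<lambda>r. \<Sum>i\<in>K. a (v i) * v i $ r) $ r = lincomb a (v ` K) $ r" using rn by simp
    qed (use lincomb_dim[OF _ vK] K in simp)
    then show "\<forall>w\<in>v ` K. a w = 0" using ind a0 by simp
  qed (use K vK in auto)
qed

lemma rank_eq_card_family:
  assumes A: "A \<in> carrier_mat n nc" and K: "finite K" and vc: "\<And>i. i \<in> K \<Longrightarrow> v i \<in> carrier_vec n"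
    and cols_in: "\<And>j. j < nc \<Longrightarrow> col A j \<in> span (v ` K)"
    and v_in: "\<And>i. i \<in> K \<Longrightarrow> v i \<in> span (set (cols A))"
    and ind: "\<And>lam. vec n (\<lambda>r. \<Sum>i\<in>K. lam i * v i $ r) = 0\<^sub>v n \<Longrightarrow> \<forall>i\<in>K. lam i = 0"
  shows "rank A = card K"
proof -
  have inj: "inj_on v K" and li: "lin_indpt (v ` K)" using lin_indpt_family[OF K vc ind] by auto
  have cA: "set (cols A) \<subseteq> carrier_vec n" using A cols_dim by blast
  have cK: "v ` K \<subseteq> carrier_vec n" using vc by auto
  have "set (cols A) \<subseteq> span (v ` K)" using A cols_in unfolding cols_def by auto
  moreover have "v ` K \<subseteq> span (set (cols A))" using v_in by auto
  ultimately have "span (set (cols A)) = span (v ` K)"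
    using span_is_subset[OF _ span_is_submodule[OF cK]] span_is_subset[OF _ span_is_submodule[OF cA]]
    by blast
  then have "rank A = vectorspace.dim class_ring (span_vs (v ` K))" unfolding rank_def by simp
  also have "\<dots> = card (v ` K)"
    using dim_span[OF cK] li K unfolding maximal_def by blast
  also have "\<dots> = card K" using card_image[OF inj] .
  finally show ?thesis .
qed

end

definition kernel_span :: "'b set \<Rightarrow> ('b \<Rightarrow> 'b \<Rightarrow> real) \<Rightarrow> ('b \<Rightarrow> real) set" where
  "kernel_span X k = {f. \<exists>c. \<forall>P\<in>X. f P = (\<Sum>Q\<in>X. c Q * k P Q)}"

lemma kernel_span_column:
  assumes "finite X" "Q \<in> X"
  shows "(\<lambda>P. k P Q) \<in> kernel_span X k"
proof -
  have "(\<Sum>Q'\<in>X. (if Q = Q' then 1 else 0) * k P Q') = (\<Sum>Q'\<in>X. if Q = Q' then k P Q' else 0)" for P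
    by (rule sum.cong) auto
  then have "(\<Sum>Q'\<in>X. (if Q = Q' then 1 else 0) * k P Q') = k P Q" for P
    using sum.delta'[OF assms(1), of Q "k P"] assms(2) by simp
  then show ?thesis unfolding kernel_span_def
    by (intro CollectI exI[of _ "\<lambda>Q'. if Q = Q' then 1 else 0"]) simp
qed

lemma kernel_span_zero: "(\<lambda>P. 0) \<in> kernel_span X k"
  unfolding kernel_span_def by (intro CollectI exI[of _ "\<lambda>_. 0"]) simp

lemma kernel_span_add:
  assumes "f \<in> kernel_span X k" "g \<in> kernel_span X k"
  shows "(\<lambda>P. f P + g P) \<in> kernel_span X k"
proof -
  obtain c c' where "\<forall>P\<in>X. f P = (\<Sum>Q\<in>X. c Q * k P Q)" "\<forall>P\<in>X. g P = (\<Sum>Q\<in>X. c' Q * k P Q)"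
    using assms unfolding kernel_span_def by blast
  then show ?thesis unfolding kernel_span_def
    by (intro CollectI exI[of _ "\<lambda>Q. c Q + c' Q"]) (simp add: sum.distrib distrib_right)
qed

lemma kernel_span_scale:
  assumes "f \<in> kernel_span X k"
  shows "(\<lambda>P. a * f P) \<in> kernel_span X k"
proof -
  obtain c where "\<forall>P\<in>X. f P = (\<Sum>Q\<in>X. c Q * k P Q)"
    using assms unfolding kernel_span_def by blast
  then show ?thesis unfolding kernel_span_def
    by (intro CollectI exI[of _ "\<lambda>Q. a * c Q"]) (simp add: sum_distrib_left mult.assoc)
qed

lemma kernel_span_diff:
  "f \<in> kernel_span X k \<Longrightarrow> g \<in> kernel_span X k \<Longrightarrow> (\<lambda>P. f P - g P) \<in> kernel_span X k"
  using kernel_span_add[of f X k "\<lambda>P. -1 * g P"] kernel_span_scale[of g X k "-1"] by simp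

lemma kernel_span_sum:
  "finite I \<Longrightarrow> (\<And>i. i \<in> I \<Longrightarrow> f i \<in> kernel_span X k) \<Longrightarrow> (\<lambda>P. \<Sum>i\<in>I. f i P) \<in> kernel_span X k"
  by (induction I rule: finite_induct) (auto intro: kernel_span_zero kernel_span_add)

lemma kernel_span_cong:
  "f \<in> kernel_span X k \<Longrightarrow> (\<And>P. P \<in> X \<Longrightarrow> g P = f P) \<Longrightarrow> g \<in> kernel_span X k"
  unfolding kernel_span_def by auto

lemma rank_kernel_mat:
  fixes k :: "'b \<Rightarrow> 'b \<Rightarrow> real" and \<phi> :: "'i \<Rightarrow> 'b \<Rightarrow> real"
  assumes g: "bij_betw g {0..<N} X" and K: "finite K"
    and decomp: "\<And>P Q. P \<in> X \<Longrightarrow> Q \<in> X \<Longrightarrow> k P Q = (\<Sum>i\<in>K. a i Q * \<phi> i P)"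
    and span: "\<And>i. i \<in> K \<Longrightarrow> \<phi> i \<in> kernel_span X k"
    and indep: "\<And>lam. (\<And>P. P \<in> X \<Longrightarrow> (\<Sum>i\<in>K. lam i * \<phi> i P) = 0) \<Longrightarrow> \<forall>i\<in>K. lam i = 0"
  shows "vec_space.rank N (mat N N (\<lambda>(i, j). k (g i) (g j))) = card K"
proof -
  interpret vec_space "TYPE(real)" N .
  define M where "M = mat N N (\<lambda>(i, j). k (g i) (g j))"
  define v where "v i = vec N (\<lambda>r. \<phi> i (g r))" for i
  have gX: "\<And>r. r < N \<Longrightarrow> g r \<in> X" using g unfolding bij_betw_def by auto
  have Mc: "M \<in> carrier_mat N N" unfolding M_def by simp
  have colM: "\<And>j. j < N \<Longrightarrow> col M j = vec N (\<lambda>r. k (g r) (g j))" unfolding M_def by auto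
  have vK: "v ` K \<subseteq> carrier_vec N" unfolding v_def by auto
  have cM: "set (cols M) \<subseteq> carrier_vec N" using Mc cols_dim by blast
  have "rank M = card K"
  proof (rule rank_eq_card_family[OF Mc K])
    fix j assume j: "j < N"
    have "col M j = vec N (\<lambda>r. \<Sum>i\<in>K. a i (g j) * v i $ r)"
      using colM[OF j] decomp[OF gX gX[OF j]] unfolding v_def by auto
    moreover have "vec N (\<lambda>r. \<Sum>i\<in>K. a i (g j) * v i $ r) \<in> span (v ` K)"
      by (rule vec_lincomb_in_span[OF vK K]) (use in_own_span[OF vK] in auto)
    ultimately show "col M j \<in> span (v ` K)" by simp
  next
    fix i assume i: "i \<in> K"
    obtain c where c: "\<And>P. P \<in> X \<Longrightarrow> \<phi> i P = (\<Sum>Q\<in>X. c Q * k P Q)"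
      using span[OF i] unfolding kernel_span_def by blast
    have "v i = vec N (\<lambda>r. \<Sum>j\<in>{0..<N}. c (g j) * col M j $ r)"
      using c gX colM unfolding v_def sum.reindex_bij_betw[OF g, symmetric] by (intro eq_vecI) auto
    moreover have "vec N (\<lambda>r. \<Sum>j\<in>{0..<N}. c (g j) * col M j $ r) \<in> span (set (cols M))"
      by (rule vec_lincomb_in_span[OF cM]) (use in_own_span[OF cM] Mc in \<open>auto simp: cols_def\<close>)
    ultimately show "v i \<in> span (set (cols M))" by simp
  next
    fix lam assume z: "vec N (\<lambda>r. \<Sum>i\<in>K. lam i * v i $ r) = 0\<^sub>v N"
    have "(\<Sum>i\<in>K. lam i * \<phi> i P) = 0" if P: "P \<in> X" for P
    proof -
      obtain r where "r < N" "g r = P" using g P unfolding bij_betw_def by auto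
      then show ?thesis using arg_cong[OF z, of "\<lambda>w. w $ r"] unfolding v_def by simp
    qed
    then show "\<forall>i\<in>K. lam i = 0" by (rule indep)
  qed (simp add: v_def)
  then show ?thesis unfolding M_def .
qed

lemma sum_two_points:
  fixes f :: "'b \<Rightarrow> 'c :: comm_ring_1"
  assumes "finite A" "x \<in> A" "y \<in> A" "x \<noteq> y"
  shows "(\<Sum>i\<in>A. f i * (if i = x then \<alpha> else if i = y then \<beta> else 0)) = \<alpha> * f x + \<beta> * f y"
proof -
  have "(\<Sum>i\<in>A. f i * (if i = x then \<alpha> else if i = y then \<beta> else 0))
      = (\<Sum>i\<in>A. (if i = x then \<alpha> * f i else 0) + (if i = y then \<beta> * f i else 0))"
    using assms(4) by (intro sum.cong) auto
  then show ?thesis using assms by (simp add: sum.distrib)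
qed

section \<open>A basis of the column space\<close>

context tree begin

lemma other_edge_at_inner_end:
  assumes e: "e \<in> inner_edges" and a: "a \<in> e"
  obtains x where "{a, x} \<in> E" "{a, x} \<noteq> e"
proof -
  have eE: "e \<in> E" and da: "degree E a \<noteq> 1"
    using e a unfolding inner_edges_def pendant_edges_def by auto
  have "\<exists>e'\<in>E. a \<in> e' \<and> e' \<noteq> e"
  proof (rule ccontr)
    assume "\<not> ?thesis"
    then have "{e'\<in>E. a \<in> e'} = {e}" using eE a by blast
    then show False using da unfolding degree_def by simp
  qed
  then obtain e' where "e' \<in> E" "a \<in> e'" "e' \<noteq> e" by blast
  then show ?thesis using that edge_other_end by blast
qed

lemma straddle_values:
  assumes e: "e = {a, b}" "e \<in> E" and ax: "{a, x} \<in> E" and xb: "x \<noteq> b"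
  shows "cut_ind e {a, x} = 0" "cut_ind e {b, x} = 1"
    "side_sign e {a, x} = 2 * of_bool (side e a) - 1" "side_sign e {b, x} = 0"
    "\<And>f. f \<in> E \<Longrightarrow> f \<noteq> e \<Longrightarrow>
      cut_ind f {a, x} = cut_ind f {b, x} \<and> side_sign f {a, x} = side_sign f {b, x}"
proof -
  have aV: "a \<in> V" using ax adj_in_V by blast
  have xa: "x \<noteq> a" using adj_neq ax by blast
  have "e \<noteq> {a, x}" using e xb adj_neq by (auto simp: doubleton_eq_iff)
  then have sx: "side e x = side e a" using side_adj[OF e(2) aV ax] by simp
  have sb: "side e b = (\<not> side e a)" using side_other_end e by simp
  have s: "side_sign e {a, x} = 2 * of_bool (side e a) - 1" "side_sign e {b, x} = 0"
    using side_sign_pair[OF xa[symmetric]] side_sign_pair[OF xb[symmetric]] sx sb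
    by (simp_all add: insert_commute)
  then show "side_sign e {a, x} = 2 * of_bool (side e a) - 1" "side_sign e {b, x} = 0"
    "cut_ind e {b, x} = 1" by (simp_all add: cut_ind_def)
  show "cut_ind e {a, x} = 0"
    unfolding cut_ind_def s by (cases "side e a") (simp_all add: power2_eq_square)
  fix f assume f: "f \<in> E" "f \<noteq> e"
  then have "side f a = side f b" using side_adj[OF f(1) aV, of b] e by simp
  then show "cut_ind f {a, x} = cut_ind f {b, x} \<and> side_sign f {a, x} = side_sign f {b, x}"
    using side_sign_pair xa xb by (simp add: cut_ind_def insert_commute)
qed

end

datatype 'e feature = Unit | Leaves | Cut 'e | Sign 'e

locale tree3 = tree +
  assumes card3: "card V \<ge> 3"
begin

abbreviation entry :: "'a set \<Rightarrow> 'a set \<Rightarrow> real" where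
  "entry P Q \<equiv> real (max4pc_entry E P Q)"

definition leaf_count :: "'a set \<Rightarrow> real" where
  "leaf_count P = card (P \<inter> pendant_vertices V E)"

lemma sum_pendant_cut_ind:
  assumes P: "P \<in> pairs V"
  shows "(\<Sum>e\<in>pendant_edges. cut_ind e P) = leaf_count P"
proof -
  have "cut_ind (leaf_edge l) P = of_bool (l \<in> P)" if l: "l \<in> pendant_vertices V E" for l
  proof -
    have dl: "degree E l = 1" using l unfolding pendant_vertices_def by simp
    obtain w where "leaf_edge l = {l, w}" using edge_other_end leaf_edge(1,2)[OF dl] by blast
    then show ?thesis using leaf_edge_values(1)[OF dl _ P] leaf_edge(1)[OF dl] by simp
  qed
  then have "(\<Sum>e\<in>pendant_edges. cut_ind e P) = (\<Sum>l\<in>pendant_vertices V E. of_bool (l \<in> P))"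
    using sum.reindex_bij_betw[OF bij_betw_leaf_edge[OF card3], of "\<lambda>e. cut_ind e P"] by simp
  also have "\<dots> = leaf_count P"
    using finite_vertices unfolding leaf_count_def pendant_vertices_def by (simp add: Int_commute Int_def)
  finally show ?thesis .
qed

lemma max4pc_entry_decomp:
  assumes P: "P \<in> pairs V" and Q: "Q \<in> pairs V"
  shows "entry P Q = leaf_count P + leaf_count Q + card inner_edges
    + (\<Sum>e\<in>inner_edges. cut_ind e P * cut_ind e Q - side_sign e P * side_sign e Q)"
proof -
  have "pendant_edges \<subseteq> E" unfolding pendant_edges_def by auto
  then have "entry P Q = (\<Sum>e\<in>pendant_edges. 1 + cut_ind e P * cut_ind e Q - side_sign e P * side_sign e Q)
    + (\<Sum>e\<in>inner_edges. 1 + cut_ind e P * cut_ind e Q - side_sign e P * side_sign e Q)"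
    unfolding max4pc_entry_eq_sum[OF P Q] inner_edges_def using sum.subset_diff[OF _ finite_edges]
    by (simp add: add.commute)
  also have "(\<Sum>e\<in>pendant_edges. 1 + cut_ind e P * cut_ind e Q - side_sign e P * side_sign e Q)
      = leaf_count P + leaf_count Q"
    using pendant_edge_term[OF _ P Q] sum_pendant_cut_ind[OF P] sum_pendant_cut_ind[OF Q]
    by (simp add: sum.distrib)
  finally show ?thesis by (simp add: sum_subtractf sum.distrib)
qed

lemma finite_pairs: "finite (pairs V)"
  using finite_vertices finite_subset[of "pairs V" "Pow V"] unfolding pairs_def by auto

lemma finite_inner_edges: "finite inner_edges"
  using finite_edges unfolding inner_edges_def by simp

fun feature :: "'a set feature \<Rightarrow> 'a set \<Rightarrow> real" where
  "feature Unit P = 1"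
| "feature Leaves P = leaf_count P"
| "feature (Cut e) P = cut_ind e P"
| "feature (Sign e) P = side_sign e P"

fun feature_coeff :: "'a set feature \<Rightarrow> 'a set \<Rightarrow> real" where
  "feature_coeff Unit Q = leaf_count Q + card inner_edges"
| "feature_coeff Leaves Q = 1"
| "feature_coeff (Cut e) Q = cut_ind e Q"
| "feature_coeff (Sign e) Q = - side_sign e Q"

definition features :: "'a set feature set" where
  "features = {Unit, Leaves} \<union> Cut ` inner_edges \<union> Sign ` inner_edges"

lemma finite_features: "finite features"
  unfolding features_def using finite_inner_edges by simp

lemma sum_features:
  "(\<Sum>i\<in>features. h i) = h Unit + h Leaves + (\<Sum>e\<in>inner_edges. h (Cut e)) + (\<Sum>e\<in>inner_edges. h (Sign e))"
proof -
  have "(\<Sum>i\<in>features. h i) = (\<Sum>i\<in>{Unit, Leaves} \<union> Cut ` inner_edges. h i)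
      + (\<Sum>i\<in>Sign ` inner_edges. h i)"
    unfolding features_def using finite_inner_edges by (intro sum.union_disjoint) auto
  also have "(\<Sum>i\<in>{Unit, Leaves} \<union> Cut ` inner_edges. h i)
      = (\<Sum>i\<in>{Unit, Leaves}. h i) + (\<Sum>i\<in>Cut ` inner_edges. h i)"
    using finite_inner_edges by (intro sum.union_disjoint) auto
  finally
  show ?thesis by (simp add: sum.reindex inj_on_def)
qed

lemma card_features: "card features = 2 + 2 * card inner_edges"
  using sum_features[of "\<lambda>_. 1 :: nat"] by simp

lemma max4pc_entry_features:
  assumes "P \<in> pairs V" "Q \<in> pairs V"
  shows "entry P Q = (\<Sum>i\<in>features. feature_coeff i Q * feature i P)"
  unfolding sum_features max4pc_entry_decomp[OF assms]
  by (simp add: sum_subtractf sum_negf algebra_simps)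

text \<open>The pairs {a, x} and {b, x} straddle the edge ab and lie on the same side of every other
  edge, so the corresponding columns differ only in the term of ab.\<close>
lemma straddle_diff:
  assumes e: "e \<in> inner_edges" "e = {a, b}" and ax: "{a, x} \<in> E" and xb: "x \<noteq> b"
  defines "c \<equiv> 2 * of_bool (side e a) - 1"
  shows "{a, x} \<in> pairs V" "{b, x} \<in> pairs V"
    and "\<And>P. P \<in> pairs V \<Longrightarrow> entry P {a, x} - entry P {b, x} = - cut_ind e P - c * side_sign e P"
    and "\<And>i. i \<in> features \<Longrightarrow>
      feature i {a, x} - feature i {b, x} = (if i = Cut e then -1 else if i = Sign e then c else 0)"
proof -
  have eE: "e \<in> E" using e unfolding inner_edges_def by simp
  have V: "a \<in> V" "b \<in> V" "x \<in> V" using eE e ax adj_in_V by auto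
  show pairs: "{a, x} \<in> pairs V" "{b, x} \<in> pairs V"
    using pairsI[of a V x] pairsI[of b V x] V adj_neq[OF ax] xb by auto
  note vals = straddle_values[OF e(2) eE ax xb]
  have "degree E a \<noteq> 1" "degree E b \<noteq> 1"
    using e unfolding inner_edges_def pendant_edges_def by auto
  then have "{a, x} \<inter> pendant_vertices V E = {b, x} \<inter> pendant_vertices V E"
    unfolding pendant_vertices_def by auto
  then have leaves: "leaf_count {a, x} = leaf_count {b, x}" unfolding leaf_count_def by simp
  have inner: "f \<in> inner_edges \<Longrightarrow> f \<noteq> e \<Longrightarrow> f \<in> E" for f unfolding inner_edges_def by simp
  show "entry P {a, x} - entry P {b, x} = - cut_ind e P - c * side_sign e P" if P: "P \<in> pairs V" for P
  proof -
    have "entry P {a, x} - entry P {b, x} = (\<Sum>f\<in>inner_edges. cut_ind f P * (cut_ind f {a, x} - cut_ind f {b, x})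
        - side_sign f P * (side_sign f {a, x} - side_sign f {b, x}))"
      unfolding max4pc_entry_decomp[OF P pairs(1)] max4pc_entry_decomp[OF P pairs(2)] leaves
      by (simp add: sum_subtractf[symmetric] algebra_simps)
    also have "\<dots> = cut_ind e P * (cut_ind e {a, x} - cut_ind e {b, x})
        - side_sign e P * (side_sign e {a, x} - side_sign e {b, x})"
      using vals(5) inner e(1) finite_inner_edges by (subst sum.mono_neutral_right[of _ "{e}"]) auto
    finally show ?thesis using vals(1-4) unfolding c_def by simp
  qed
  show "feature i {a, x} - feature i {b, x} = (if i = Cut e then -1 else if i = Sign e then c else 0)"
    if i: "i \<in> features" for i
  proof (cases i)
    case (Cut f)
    then have "f \<in> inner_edges" using i unfolding features_def by auto
    then show ?thesis using Cut vals(1,2) vals(5)[OF inner] by (cases "f = e") auto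
  next
    case (Sign f)
    then have "f \<in> inner_edges" using i unfolding features_def by auto
    then show ?thesis using Sign vals(3,4) vals(5)[OF inner] unfolding c_def by (cases "f = e") auto
  qed (use leaves in simp_all)
qed

lemma inner_edge_straddles:
  assumes e: "e \<in> inner_edges"
  obtains a b x y where "e = {a, b}" "{a, x} \<in> E" "x \<noteq> b" "{b, y} \<in> E" "y \<noteq> a"
    "side e b = (\<not> side e a)"
proof -
  have eE: "e \<in> E" using e unfolding inner_edges_def by simp
  obtain a b where ab: "e = {a, b}" using edge_tail_head[OF eE] by blast
  obtain x where x: "{a, x} \<in> E" "{a, x} \<noteq> e" using other_edge_at_inner_end[OF e] ab by blast
  obtain y where y: "{b, y} \<in> E" "{b, y} \<noteq> e" using other_edge_at_inner_end[OF e] ab by blast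
  show ?thesis
    using that[OF ab x(1) _ y(1)] x(2) y(2) side_other_end eE ab by (auto simp: insert_commute)
qed

lemma pairs_with_distinct_leaf_counts:
  obtains P Q where "P \<in> pairs V" "Q \<in> pairs V" "leaf_count P \<noteq> leaf_count Q"
proof -
  obtain l where l: "l \<in> V" "degree E l = 1" using exists_leaf card3 by fastforce
  obtain m where lm: "{l, m} \<in> E" using edge_other_end leaf_edge(1,2)[OF l(2)] by metis
  have m: "m \<in> V" "m \<noteq> l" "degree E m \<noteq> 1"
    using adj_in_V(2)[OF lm] adj_neq[OF lm] not_adjacent_leaves[OF card3 lm l(2)] by auto
  have P: "{l, m} \<in> pairs V" "leaf_count {l, m} = 1"
    using pairsI[of l V m] l m unfolding leaf_count_def pendant_vertices_def by (auto simp: Int_insert_left)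
  show ?thesis
  proof (cases "\<exists>w\<in>V. w \<noteq> m \<and> degree E w \<noteq> 1")
    case True
    then obtain w where w: "w \<in> V" "w \<noteq> m" "degree E w \<noteq> 1" by blast
    have "{m, w} \<in> pairs V" "leaf_count {m, w} = 0"
      using pairsI[of m V w] m w unfolding leaf_count_def pendant_vertices_def by auto
    then show ?thesis using that P by fastforce
  next
    case False
    have "card {l, m} \<le> 2" by (cases "l = m") auto
    then have "\<not> V \<subseteq> {l, m}" using card_mono[of "{l, m}" V] card3 by auto
    then obtain w where w: "w \<in> V" "w \<noteq> l" "w \<noteq> m" by blast
    then have "{l, w} \<in> pairs V" "leaf_count {l, w} = 2"
      using pairsI[of l V w] False l unfolding leaf_count_def pendant_vertices_def by auto
    then show ?thesis using that P by fastforce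
  qed
qed

lemma features_independent:
  assumes z: "\<And>P. P \<in> pairs V \<Longrightarrow> (\<Sum>i\<in>features. lam i * feature i P) = 0"
  shows "\<forall>i\<in>features. lam i = 0"
proof -
  have diff: "(\<Sum>i\<in>features. lam i * (feature i P - feature i Q)) = 0"
    if "P \<in> pairs V" "Q \<in> pairs V" for P Q
    using z[OF that(1)] z[OF that(2)] by (simp add: right_diff_distrib sum_subtractf)
  have inner: "lam (Cut e) = 0 \<and> lam (Sign e) = 0" if e: "e \<in> inner_edges" for e
  proof -
    obtain a b x y where ab: "e = {a, b}" "{a, x} \<in> E" "x \<noteq> b" "{b, y} \<in> E" "y \<noteq> a"
      and sb: "side e b = (\<not> side e a)" using inner_edge_straddles[OF e] .
    have ba: "e = {b, a}" using ab(1) by (simp add: insert_commute)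
    have mem: "Cut e \<in> features" "Sign e \<in> features" using e unfolding features_def by auto
    define c where "c = 2 * of_bool (side e a) - (1::real)"
    have c': "2 * of_bool (side e b) - 1 = - c" using sb unfolding c_def by simp
    have "(\<Sum>i\<in>features. lam i * (feature i {a, x} - feature i {b, x}))
        = (\<Sum>i\<in>features. lam i * (if i = Cut e then -1 else if i = Sign e then c else 0))"
      using straddle_diff(4)[OF e ab(1-3)] unfolding c_def by (intro sum.cong) auto
    then have "- lam (Cut e) + c * lam (Sign e) = 0"
      using diff[OF straddle_diff(1,2)[OF e ab(1-3)]] sum_two_points[OF finite_features mem, of lam "-1" c]
      by simp
    moreover have "(\<Sum>i\<in>features. lam i * (feature i {b, y} - feature i {a, y}))
        = (\<Sum>i\<in>features. lam i * (if i = Cut e then -1 else if i = Sign e then - c else 0))"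
      using straddle_diff(4)[OF e ba ab(4,5)] c' by (intro sum.cong) auto
    then have "- lam (Cut e) - c * lam (Sign e) = 0"
      using diff[OF straddle_diff(1,2)[OF e ba ab(4,5)]] sum_two_points[OF finite_features mem, of lam "-1" "- c"]
      by simp
    ultimately have L: "lam (Cut e) = 0" and cS: "c * lam (Sign e) = 0" by linarith+
    have "c * c = 1" unfolding c_def by simp
    then have "lam (Sign e) = c * (c * lam (Sign e))" by (simp add: mult.assoc[symmetric])
    then show ?thesis using L cS by simp
  qed
  have affine: "lam Unit + lam Leaves * leaf_count P = 0" if "P \<in> pairs V" for P
    using z[OF that] inner unfolding sum_features by simp
  obtain P Q where PQ: "P \<in> pairs V" "Q \<in> pairs V" "leaf_count P \<noteq> leaf_count Q"
    by (rule pairs_with_distinct_leaf_counts)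
  have "lam Leaves * (leaf_count P - leaf_count Q) = 0"
    using affine[OF PQ(1)] affine[OF PQ(2)] unfolding right_diff_distrib by linarith
  then have "lam Leaves = 0" "lam Unit = 0" using PQ(3) affine[OF PQ(1)] by auto
  then show ?thesis using inner unfolding features_def by auto
qed

lemma inner_edge_features_in_kernel_span:
  assumes e: "e \<in> inner_edges"
  shows "cut_ind e \<in> kernel_span (pairs V) entry" "side_sign e \<in> kernel_span (pairs V) entry"
proof -
  obtain a b x y where ab: "e = {a, b}" "{a, x} \<in> E" "x \<noteq> b" "{b, y} \<in> E" "y \<noteq> a"
    and sb: "side e b = (\<not> side e a)" using inner_edge_straddles[OF e] .
  have ba: "e = {b, a}" using ab(1) by (simp add: insert_commute)
  note d1 = straddle_diff[OF e ab(1-3)] and d2 = straddle_diff[OF e ba ab(4,5)]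
  define c where "c = 2 * of_bool (side e a) - (1::real)"
  have c2: "c * c = 1" unfolding c_def by simp
  let ?D1 = "\<lambda>P. entry P {a, x} - entry P {b, x}" and ?D2 = "\<lambda>P. entry P {b, y} - entry P {a, y}"
  have D: "?D1 \<in> kernel_span (pairs V) entry" "?D2 \<in> kernel_span (pairs V) entry"
    using kernel_span_diff[OF kernel_span_column[OF finite_pairs d1(1), of entry] kernel_span_column[OF finite_pairs d1(2), of entry]]
      kernel_span_diff[OF kernel_span_column[OF finite_pairs d2(1), of entry] kernel_span_column[OF finite_pairs d2(2), of entry]]
    by simp_all
  have vals: "?D1 P = - cut_ind e P - c * side_sign e P" "?D2 P = - cut_ind e P + c * side_sign e P"
    if "P \<in> pairs V" for P
    using d1(3)[OF that] d2(3)[OF that] sb unfolding c_def by (auto simp: algebra_simps)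
  show "cut_ind e \<in> kernel_span (pairs V) entry"
    using kernel_span_scale[OF kernel_span_add[OF D], of "- 1 / 2"]
    by (rule kernel_span_cong) (simp add: vals)
  show "side_sign e \<in> kernel_span (pairs V) entry"
    using kernel_span_scale[OF kernel_span_diff[OF D(2,1)], of "c / 2"]
    by (rule kernel_span_cong) (simp add: vals algebra_simps c2)
qed

lemma leaf_count_column_in_kernel_span:
  assumes Q: "Q \<in> pairs V"
  shows "(\<lambda>P. leaf_count Q + card inner_edges + leaf_count P) \<in> kernel_span (pairs V) entry"
proof -
  have "(\<lambda>P. \<Sum>e\<in>inner_edges. cut_ind e Q * cut_ind e P + (- side_sign e Q) * side_sign e P)
      \<in> kernel_span (pairs V) entry"
    using finite_inner_edges inner_edge_features_in_kernel_span
    by (intro kernel_span_sum kernel_span_add kernel_span_scale) auto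
  then have "(\<lambda>P. entry P Q - (\<Sum>e\<in>inner_edges. cut_ind e Q * cut_ind e P + (- side_sign e Q) * side_sign e P))
      \<in> kernel_span (pairs V) entry"
    using kernel_span_diff[OF kernel_span_column[OF finite_pairs Q, of entry]] by blast
  then show ?thesis
    by (rule kernel_span_cong) (simp add: max4pc_entry_decomp Q sum_subtractf mult.commute)
qed

lemma feature_in_kernel_span:
  assumes i: "i \<in> features"
  shows "feature i \<in> kernel_span (pairs V) entry"
proof -
  obtain P Q where PQ: "P \<in> pairs V" "Q \<in> pairs V" "leaf_count P \<noteq> leaf_count Q"
    by (rule pairs_with_distinct_leaf_counts)
  note LP = leaf_count_column_in_kernel_span[OF PQ(1)] and LQ = leaf_count_column_in_kernel_span[OF PQ(2)]
  have unit: "feature Unit \<in> kernel_span (pairs V) entry"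
    using kernel_span_scale[OF kernel_span_diff[OF LP LQ], of "1 / (leaf_count P - leaf_count Q)"]
    by (rule kernel_span_cong) (use PQ(3) in simp)
  have "feature Leaves \<in> kernel_span (pairs V) entry"
    using kernel_span_diff[OF LP kernel_span_scale[OF unit, of "leaf_count P + card inner_edges"]]
    by (rule kernel_span_cong) simp
  moreover have "feature (Cut e) = cut_ind e" "feature (Sign e) = side_sign e" for e by auto
  ultimately show ?thesis
    using i unit inner_edge_features_in_kernel_span unfolding features_def by auto
qed

end

theorem theorem1:
  fixes V :: "'a set" and E :: "'a set set" and n p :: nat
  assumes "is_tree V E"
    and "card V = n" and "n \<ge> 3"
    and "card (pendant_vertices V E) = p"
  shows "real_mat_rank (Max4PC V E) = 2 * (n - p)"
proof -
  interpret tree3 V E using assms by unfold_locales auto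
  have enum: "bij_betw (enum_of (pairs V)) {0..<card (pairs V)} (pairs V)"
    unfolding enum_of_def using ex_bij_betw_nat_finite[OF finite_pairs] by (rule someI_ex)
  have "real_mat_rank (Max4PC V E) = card features"
    unfolding real_mat_rank_def Max4PC_def Let_def
    using rank_kernel_mat[OF enum finite_features max4pc_entry_features
        feature_in_kernel_span features_independent]
    by simp
  also have "\<dots> = 2 * (n - p)"
    using card_features card_inner_edges[OF card3] assms(2-4) by simp
  finally show ?thesis .
qed

end
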